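(* Let $M$ be a down-shop-monoid on $[n]$, let $g$ be the maximal reflexive and symmetric multipermutation in $M$ (which is a blurred permutation), and let $f$ be a blurred permutation on $[n]$ that respects $g$. Then $f\in M$ if and only if there exists a multipermutation $f'$ that is a sub-multipermutation of $f$ with $f'\in M$.
   Context: A multipermutation on $[n]$ is a map $f:[n]\to\mathcal{P}([n])\setminus\{\emptyset\}$ with every $y$ in some $f(x)$; $(g\circ f)(x)=\{z:\exists y\,(y\in f(x)\wedge z\in g(y))\}$; $f'$ is a sub-multipermutation of $f$ if $f'(x)\subseteq f(x)$ for all $x$. A down-shop-monoid (DSM) is a set of multipermutations containing the identity $x\mapsto\{x\}$, closed under composition and under sub-multipermutations that are multipermutations; each DSM has a unique maximal (w.r.t. sub-multipermutation) reflexive ($a\in g(a)$) and symmetric ($a\in g(b)\iff b\in g(a)$) member. A blurred permutation with associated partition $P_1,\dots,P_m$ is a multipermutation $h$ for which there is a permutation $\sigma$ of $[m]$ ($m\le n$) with $i\in P_i$ for $i\in[m]$ and $h(x)=P_{\sigma(i)}$ for all $x\in P_i$. A multipermutation $f$ respects the blurred permutation $g$ (with partition $P_1,\dots,P_m$) if neither (i) there are $a,b$ in the same block and $c,d$ in distinct blocks with $c\in f(a)$, $d\in f(b)$, nor (ii) there are $a,b$ in distinct blocks and $c,d$ in the same block with $c\in f(a)$, $d\in f(b)$. *)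

theory Defs
  imports Main
begin

(* A multipermutation on [n] = {1..n} is represented extensionally as a map
   nat => nat set that is {} outside [n]. *)
definition multiperm :: "nat \<Rightarrow> (nat \<Rightarrow> nat set) \<Rightarrow> bool" where
  "multiperm n f \<longleftrightarrow>
     (\<forall>x\<in>{1..n}. f x \<noteq> {} \<and> f x \<subseteq> {1..n}) \<and>
     (\<forall>x. x \<notin> {1..n} \<longrightarrow> f x = {}) \<and>
     (\<forall>y\<in>{1..n}. \<exists>x\<in>{1..n}. y \<in> f x)"

definition mp_id :: "nat \<Rightarrow> nat \<Rightarrow> nat set" where
  "mp_id n = (\<lambda>x. if x \<in> {1..n} then {x} else {})"

definition mp_comp :: "(nat \<Rightarrow> nat set) \<Rightarrow> (nat \<Rightarrow> nat set) \<Rightarrow> nat \<Rightarrow> nat set" where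
  "mp_comp g f = (\<lambda>x. {z. \<exists>y. y \<in> f x \<and> z \<in> g y})"

definition sub_mp :: "(nat \<Rightarrow> nat set) \<Rightarrow> (nat \<Rightarrow> nat set) \<Rightarrow> bool" where
  "sub_mp f' f \<longleftrightarrow> (\<forall>x. f' x \<subseteq> f x)"

definition DSM :: "nat \<Rightarrow> (nat \<Rightarrow> nat set) set \<Rightarrow> bool" where
  "DSM n M \<longleftrightarrow>
     (\<forall>f\<in>M. multiperm n f) \<and>
     mp_id n \<in> M \<and>
     (\<forall>f\<in>M. \<forall>g\<in>M. mp_comp g f \<in> M) \<and>
     (\<forall>f\<in>M. \<forall>f'. multiperm n f' \<and> sub_mp f' f \<longrightarrow> f' \<in> M)"

definition refl_sym_mp :: "nat \<Rightarrow> (nat \<Rightarrow> nat set) \<Rightarrow> bool" where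
  "refl_sym_mp n g \<longleftrightarrow>
     (\<forall>a\<in>{1..n}. a \<in> g a) \<and>
     (\<forall>a\<in>{1..n}. \<forall>b\<in>{1..n}. a \<in> g b \<longleftrightarrow> b \<in> g a)"

(* h is a blurred permutation with associated partition P_1..P_m and permutation sigma of [m] *)
definition blurred_wrt ::
  "nat \<Rightarrow> (nat \<Rightarrow> nat set) \<Rightarrow> nat \<Rightarrow> (nat \<Rightarrow> nat set) \<Rightarrow> (nat \<Rightarrow> nat) \<Rightarrow> bool" where
  "blurred_wrt n h m P \<sigma> \<longleftrightarrow>
     multiperm n h \<and> m \<le> n \<and>
     (\<forall>i\<in>{1..m}. P i \<noteq> {} \<and> P i \<subseteq> {1..n} \<and> i \<in> P i) \<and>
     (\<forall>i\<in>{1..m}. \<forall>j\<in>{1..m}. i \<noteq> j \<longrightarrow> P i \<inter> P j = {}) \<and>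
     (\<Union>i\<in>{1..m}. P i) = {1..n} \<and>
     bij_betw \<sigma> {1..m} {1..m} \<and>
     (\<forall>i\<in>{1..m}. \<forall>x\<in>P i. h x = P (\<sigma> i))"

definition blurred_perm :: "nat \<Rightarrow> (nat \<Rightarrow> nat set) \<Rightarrow> bool" where
  "blurred_perm n h \<longleftrightarrow> (\<exists>m P \<sigma>. blurred_wrt n h m P \<sigma>)"

definition same_block :: "nat \<Rightarrow> (nat \<Rightarrow> nat set) \<Rightarrow> nat \<Rightarrow> nat \<Rightarrow> bool" where
  "same_block m P a b \<longleftrightarrow> (\<exists>i\<in>{1..m}. a \<in> P i \<and> b \<in> P i)"

definition respects_bp :: "nat \<Rightarrow> (nat \<Rightarrow> nat set) \<Rightarrow> (nat \<Rightarrow> nat set) \<Rightarrow> bool" where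
  "respects_bp n f g \<longleftrightarrow>
     (\<exists>m P \<sigma>. blurred_wrt n g m P \<sigma> \<and>
        \<not> (\<exists>a\<in>{1..n}. \<exists>b\<in>{1..n}. \<exists>c\<in>{1..n}. \<exists>d\<in>{1..n}.
              same_block m P a b \<and> \<not> same_block m P c d \<and> c \<in> f a \<and> d \<in> f b) \<and>
        \<not> (\<exists>a\<in>{1..n}. \<exists>b\<in>{1..n}. \<exists>c\<in>{1..n}. \<exists>d\<in>{1..n}.
              \<not> same_block m P a b \<and> same_block m P c d \<and> c \<in> f a \<and> d \<in> f b))"

end

theory Submission
  imports Defs
begin

text \<open>Only the forward-closure direction needs an argument. A reflexive blurred permutation \<open>g\<close>
  has trivial block permutation, so \<open>g x\<close> is the block of \<open>x\<close>. Condition (i) of respecting \<open>g\<close>,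
  applied with \<open>a = b\<close>, says that all values of \<open>f\<close> at one point lie in a single block. Hence if
  \<open>f' \<in> M\<close> is a sub-multipermutation of \<open>f\<close>, every value of \<open>f\<close> at \<open>x\<close> lies in \<open>g z\<close> for any
  \<open>z \<in> f' x\<close>, i.e. \<open>f\<close> is a sub-multipermutation of \<open>g \<circ> f' \<in> M\<close>, so \<open>f \<in> M\<close> by downward
  closure.\<close>

lemma DSM_mp_comp_mem: "DSM n M \<Longrightarrow> f \<in> M \<Longrightarrow> g \<in> M \<Longrightarrow> mp_comp g f \<in> M"
  unfolding DSM_def by blast

lemma DSM_sub_mp_mem: "DSM n M \<Longrightarrow> f \<in> M \<Longrightarrow> multiperm n f' \<Longrightarrow> sub_mp f' f \<Longrightarrow> f' \<in> M"
  unfolding DSM_def by blast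

lemma multiperm_nonempty: "multiperm n f \<Longrightarrow> x \<in> {1..n} \<Longrightarrow> f x \<noteq> {}"
  unfolding multiperm_def by blast

lemma multiperm_values: "multiperm n f \<Longrightarrow> c \<in> f x \<Longrightarrow> x \<in> {1..n} \<and> c \<in> {1..n}"
  unfolding multiperm_def by blast

lemma blurred_perm_multiperm: "blurred_perm n f \<Longrightarrow> multiperm n f"
  unfolding blurred_perm_def blurred_wrt_def by blast

lemma blurred_wrt_block_exists:
  "blurred_wrt n g m P \<sigma> \<Longrightarrow> x \<in> {1..n} \<Longrightarrow> \<exists>i\<in>{1..m}. x \<in> P i"
  unfolding blurred_wrt_def by blast

lemma blurred_wrt_reflexive_eq_block:
  assumes bw: "blurred_wrt n g m P \<sigma>" and refl: "\<forall>a\<in>{1..n}. a \<in> g a"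
    and i: "i \<in> {1..m}" and x: "x \<in> P i"
  shows "g x = P i"
proof -
  have g_x: "g x = P (\<sigma> i)" using bw i x unfolding blurred_wrt_def by blast
  have "x \<in> {1..n}" using bw i x unfolding blurred_wrt_def by blast
  with refl g_x have "x \<in> P (\<sigma> i)" by blast
  moreover have "\<sigma> i \<in> {1..m}" using bw i unfolding blurred_wrt_def bij_betw_def by blast
  ultimately have "\<sigma> i = i" using bw i x unfolding blurred_wrt_def by blast
  with g_x show ?thesis by simp
qed

lemma respects_bp_reflexive_values_related:
  assumes resp: "respects_bp n f g" and f: "multiperm n f" and refl: "\<forall>a\<in>{1..n}. a \<in> g a"
    and c: "c \<in> f x" and z: "z \<in> f x"
  shows "c \<in> g z"
proof -
  obtain m P \<sigma> where bw: "blurred_wrt n g m P \<sigma>" and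
    no_split: "\<not> (\<exists>a\<in>{1..n}. \<exists>b\<in>{1..n}. \<exists>c\<in>{1..n}. \<exists>d\<in>{1..n}.
              same_block m P a b \<and> \<not> same_block m P c d \<and> c \<in> f a \<and> d \<in> f b)"
    using resp unfolding respects_bp_def by blast
  have x_c: "x \<in> {1..n}" "c \<in> {1..n}" using multiperm_values[OF f c] by auto
  have z_n: "z \<in> {1..n}" using multiperm_values[OF f z] by blast
  have "same_block m P x x"
    using blurred_wrt_block_exists[OF bw x_c(1)] unfolding same_block_def by blast
  with no_split x_c z_n c z have "same_block m P c z" by blast
  then obtain j where "j \<in> {1..m}" "c \<in> P j" "z \<in> P j" unfolding same_block_def by blast
  then show ?thesis using blurred_wrt_reflexive_eq_block[OF bw refl] by blast
qed

lemma sub_mp_mp_comp: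
  assumes "sub_mp f' f" and "\<And>x. f x \<noteq> {} \<Longrightarrow> f' x \<noteq> {}"
    and "\<And>x c z. c \<in> f x \<Longrightarrow> z \<in> f x \<Longrightarrow> c \<in> g z"
  shows "sub_mp f (mp_comp g f')"
  using assms unfolding sub_mp_def mp_comp_def by blast

theorem lemma3p6:
  fixes n :: nat and M :: "(nat \<Rightarrow> nat set) set" and g f :: "nat \<Rightarrow> nat set"
  assumes "DSM n M"
    and "g \<in> M" and "refl_sym_mp n g"
    and "\<forall>h\<in>M. refl_sym_mp n h \<longrightarrow> sub_mp h g"
    and "blurred_perm n f"
    and "respects_bp n f g"
  shows "f \<in> M \<longleftrightarrow> (\<exists>f'. multiperm n f' \<and> sub_mp f' f \<and> f' \<in> M)"
proof
  have f: "multiperm n f" using assms(5) by (rule blurred_perm_multiperm)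
  show "f \<in> M \<Longrightarrow> \<exists>f'. multiperm n f' \<and> sub_mp f' f \<and> f' \<in> M"
    using f by (auto simp: sub_mp_def)
  assume "\<exists>f'. multiperm n f' \<and> sub_mp f' f \<and> f' \<in> M"
  then obtain f' where f': "multiperm n f'" "sub_mp f' f" "f' \<in> M" by blast
  have refl: "\<forall>a\<in>{1..n}. a \<in> g a" using assms(3) unfolding refl_sym_mp_def by blast
  have "sub_mp f (mp_comp g f')"
  proof (rule sub_mp_mp_comp[OF f'(2)])
    show "f' x \<noteq> {}" if "f x \<noteq> {}" for x
      using that f f' multiperm_nonempty multiperm_values by blast
    show "c \<in> g z" if "c \<in> f x" "z \<in> f x" for x c z
      using respects_bp_reflexive_values_related[OF assms(6) f refl that] .
  qed
  moreover have "mp_comp g f' \<in> M" using DSM_mp_comp_mem[OF assms(1) f'(3) assms(2)] .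
  ultimately show "f \<in> M" using DSM_sub_mp_mem[OF assms(1) _ f] by blast
qed

end
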